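(* Let $\mathcal{P}$ be a collection of cells, $K$ a field and $\prec$ a monomial order on $S_{\mathcal{P}}$. For an inner interval $[p,q]$ of $\mathcal{P}$ write $f_{p,q}=x_px_q-x_{p'}x_{q'}$ for its inner 2-minor, where $p',q'$ are its anti-diagonal corners. (i) Let $a=(a_1,a_2)$, $b=(b_1,b_2)$, $\beta=(\beta_1,\beta_2)$ with $a_1<b_1<\beta_1$, $a_2<b_2<\beta_2$, such that $[a,b]$ and $[b,\beta]$ are inner intervals of $\mathcal{P}$. Put $c=(a_1,b_2)$, $d=(b_1,a_2)$, $\gamma=(b_1,\beta_2)$, $\delta=(\beta_1,b_2)$. Assume that the $S$-polynomial $S(f_{a,b},f_{b,\beta})$ reduces to $0$ modulo the set of inner 2-minors of $\mathcal{P}$ with respect to $\prec$, and that $[c,\gamma]$ and $[d,\delta]$ are not inner intervals of $\mathcal{P}$. Then $\gcd(\mathrm{in}_\prec(f_{a,b}),\mathrm{in}_\prec(f_{b,\beta}))=1$. (ii) Let $[p,q]$ and $[p',q']$ be inner intervals of $\mathcal{P}$ meeting in the single point $b$, which is the upper left corner $(p_1,q_2)$ of $[p,q]$ and the lower right corner $(q'_1,p'_2)$ of $[p',q']$. Put $r=(p'_1,p_2)$ and $h=(q_1,q'_2)$. Assume $S(f_{p,q},f_{p',q'})$ reduces to $0$ modulo the inner 2-minors of $\mathcal{P}$ with respect to $\prec$ and that $[r,b]$ and $[b,h]$ are not inner intervals of $\mathcal{P}$. Then $\gcd(\mathrm{in}_\prec(f_{p,q}),\mathrm{in}_\prec(f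_{p',q'}))=1$.
   Context: For $a\le b$ in $\mathbb{Z}^2$ (componentwise), $[a,b]$ is the set of lattice points between them; it is proper if both coordinates of $a$ are strictly smaller than those of $b$; then $a,b$ are its diagonal corners and $(a_1,b_2),(b_1,a_2)$ its anti-diagonal corners (upper left and lower right). A cell is $[a,a+(1,1)]$. A collection of cells is a finite non-empty weakly connected set $\mathcal{P}$ of cells; $V(\mathcal{P})$ is the set of vertices of its cells. An inner interval of $\mathcal{P}$ is a proper interval all of whose cells belong to $\mathcal{P}$; its inner 2-minor is $x_ax_b-x_cx_d$ ($a,b$ diagonal, $c,d$ anti-diagonal corners). $S_{\mathcal{P}}=K[x_v:v\in V(\mathcal{P})]$. $\mathrm{in}_\prec(f)$ denotes the initial monomial. *)

theory Defs
  imports Main "HOL-Library.Poly_Mapping"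
begin

type_synonym point = "int \<times> int"

definition pt_le :: "point \<Rightarrow> point \<Rightarrow> bool" where
  "pt_le a b \<longleftrightarrow> fst a \<le> fst b \<and> snd a \<le> snd b"

definition interval :: "point \<Rightarrow> point \<Rightarrow> point set" where
  "interval a b = {v. pt_le a v \<and> pt_le v b}"

definition proper :: "point \<Rightarrow> point \<Rightarrow> bool" where
  "proper a b \<longleftrightarrow> fst a < fst b \<and> snd a < snd b"

text \<open>A cell is encoded by its lower left corner c; the cell itself is [c, c+(1,1)].\<close>
definition cell :: "point \<Rightarrow> point set" where
  "cell c = interval c (fst c + 1, snd c + 1)"

definition weakly_connected :: "point set \<Rightarrow> bool" where
  "weakly_connected P \<longleftrightarrow>
     (\<forall>C\<in>P. \<forall>D\<in>P. (\<lambda>x y. x \<in> P \<and> y \<in> P \<and> cell x \<inter> cell y \<noteq> {})\<^sup>*\<^sup>* C D)"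

definition collection_of_cells :: "point set \<Rightarrow> bool" where
  "collection_of_cells P \<longleftrightarrow> finite P \<and> P \<noteq> {} \<and> weakly_connected P"

definition vertices :: "point set \<Rightarrow> point set" where
  "vertices P = (\<Union>c\<in>P. cell c)"

definition inner_interval :: "point set \<Rightarrow> point \<Rightarrow> point \<Rightarrow> bool" where
  "inner_interval P a b \<longleftrightarrow> proper a b \<and> (\<forall>c. cell c \<subseteq> interval a b \<longrightarrow> c \<in> P)"

type_synonym monm = "point \<Rightarrow>\<^sub>0 nat"
type_synonym 'k mpoly = "monm \<Rightarrow>\<^sub>0 'k"

definition Var :: "point \<Rightarrow> ('k::comm_semiring_1) mpoly" where
  "Var v = Poly_Mapping.single (Poly_Mapping.single v 1) 1"

definition monom :: "monm \<Rightarrow> 'k::comm_semiring_1 \<Rightarrow> 'k mpoly" where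
  "monom m c = Poly_Mapping.single m c"

text \<open>Membership in the polynomial ring S_P = K[x_v : v \<in> V(P)].\<close>
definition in_ring :: "point set \<Rightarrow> ('k::zero) mpoly \<Rightarrow> bool" where
  "in_ring V f \<longleftrightarrow> (\<forall>(m::monm). m \<in> Poly_Mapping.keys f \<longrightarrow> Poly_Mapping.keys m \<subseteq> V)"

definition mon_lcm :: "monm \<Rightarrow> monm \<Rightarrow> monm" where
  "mon_lcm m n = m + (n - m)"

definition mon_gcd :: "monm \<Rightarrow> monm \<Rightarrow> monm" where
  "mon_gcd m n = m - (m - n)"

definition monomial_order :: "point set \<Rightarrow> (monm \<Rightarrow> monm \<Rightarrow> bool) \<Rightarrow> bool" where
  "monomial_order V ord \<longleftrightarrow>
     (\<forall>m. Poly_Mapping.keys m \<subseteq> V \<longrightarrow> ord m m) \<and>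
     (\<forall>m n. Poly_Mapping.keys m \<subseteq> V \<longrightarrow> Poly_Mapping.keys n \<subseteq> V \<longrightarrow> ord m n \<longrightarrow> ord n m \<longrightarrow> m = n) \<and>
     (\<forall>m n l. Poly_Mapping.keys m \<subseteq> V \<longrightarrow> Poly_Mapping.keys n \<subseteq> V \<longrightarrow> Poly_Mapping.keys l \<subseteq> V \<longrightarrow>
         ord m n \<longrightarrow> ord n l \<longrightarrow> ord m l) \<and>
     (\<forall>m n. Poly_Mapping.keys m \<subseteq> V \<longrightarrow> Poly_Mapping.keys n \<subseteq> V \<longrightarrow> ord m n \<or> ord n m) \<and>
     (\<forall>m. Poly_Mapping.keys m \<subseteq> V \<longrightarrow> ord 0 m) \<and>
     (\<forall>m n l. Poly_Mapping.keys m \<subseteq> V \<longrightarrow> Poly_Mapping.keys n \<subseteq> V \<longrightarrow> Poly_Mapping.keys l \<subseteq> V \<longrightarrow>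
         ord m n \<longrightarrow> ord (m + l) (n + l))"

definition init :: "(monm \<Rightarrow> monm \<Rightarrow> bool) \<Rightarrow> ('k::zero) mpoly \<Rightarrow> monm" where
  "init ord f = (THE m. m \<in> Poly_Mapping.keys f \<and> (\<forall>m'\<in>Poly_Mapping.keys f. ord m' m))"

definition lcoeff :: "(monm \<Rightarrow> monm \<Rightarrow> bool) \<Rightarrow> ('k::zero) mpoly \<Rightarrow> 'k" where
  "lcoeff ord f = Poly_Mapping.lookup f (init ord f)"

definition spoly :: "(monm \<Rightarrow> monm \<Rightarrow> bool) \<Rightarrow> ('k::field) mpoly \<Rightarrow> 'k mpoly \<Rightarrow> 'k mpoly" where
  "spoly ord f g =
     (let L = mon_lcm (init ord f) (init ord g) in
       monom (L - init ord f) (inverse (lcoeff ord f)) * f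
       - monom (L - init ord g) (inverse (lcoeff ord g)) * g)"

text \<open>f reduces to 0 modulo G (Herzog--Hibi): f has a standard expression
  f = \<Sum> q_g g with q_g \<in> S_V and in(f) \<ge> in(q_g g) whenever q_g g \<noteq> 0.\<close>
definition reduces_to_zero ::
  "point set \<Rightarrow> (monm \<Rightarrow> monm \<Rightarrow> bool) \<Rightarrow> ('k::field) mpoly set \<Rightarrow> 'k mpoly \<Rightarrow> bool" where
  "reduces_to_zero V ord G f \<longleftrightarrow>
     (\<exists>q. \<exists>Gs \<subseteq> G. finite Gs \<and> (\<forall>g\<in>Gs. in_ring V (q g)) \<and>
        f = (\<Sum>g\<in>Gs. q g * g) \<and>
        (\<forall>g\<in>Gs. q g * g \<noteq> 0 \<longrightarrow> ord (init ord (q g * g)) (init ord f)))"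

definition minor :: "point \<Rightarrow> point \<Rightarrow> ('k::comm_ring_1) mpoly" where
  "minor a b = Var a * Var b - Var (fst a, snd b) * Var (fst b, snd a)"

definition inner_minors :: "point set \<Rightarrow> ('k::comm_ring_1) mpoly set" where
  "inner_minors P = {minor a b | a b. inner_interval P a b}"

end

theory Submission
  imports Defs
begin

(* Each inner 2-minor has as initial monomial its diagonal or its anti-diagonal term. In both
   configurations the corners of the two intervals are pairwise distinct except for the common
   corner b, so a nontrivial gcd forces both initial monomials to contain x_b. The S-polynomial
   is then a binomial x_e1 x_e2 x_e3 - x_e1' x_e2' x_e3' in six distinct vertices. Since it reduces
   to 0, its initial monomial is divisible by the initial monomial of an inner 2-minor [x,y], so
   the diagonal or the anti-diagonal corners of [x,y] lie among the e_i (resp. the e_i'). Going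
   through the few possibilities, [x,y] either contains one of the two intervals assumed not to be
   inner, or it is one of the two given intervals with its other term as initial monomial. *)

abbreviation keys :: "('a \<Rightarrow>\<^sub>0 'b::zero) \<Rightarrow> 'a set" where "keys \<equiv> Poly_Mapping.keys"
abbreviation lookup :: "('a \<Rightarrow>\<^sub>0 'b::zero) \<Rightarrow> 'a \<Rightarrow> 'b" where "lookup \<equiv> Poly_Mapping.lookup"
abbreviation single :: "'a \<Rightarrow> 'b \<Rightarrow> 'a \<Rightarrow>\<^sub>0 'b::zero" where "single \<equiv> Poly_Mapping.single"

lemma keys_add_subset: "keys m \<subseteq> V \<Longrightarrow> keys n \<subseteq> V \<Longrightarrow> keys (m + n) \<subseteq> V"
  using keys_add[of m n] by blast

lemma in_ring_mult:
  assumes "in_ring V q" "in_ring V g"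
  shows "in_ring V (q * g)"
  unfolding in_ring_def
proof (intro allI impI)
  fix m assume "m \<in> keys (q * g)"
  then obtain a b where "m = a + b" "a \<in> keys q" "b \<in> keys g"
    using keys_mult by blast
  then show "keys m \<subseteq> V"
    using assms keys_add[of a b] unfolding in_ring_def by blast
qed

context
  fixes V :: "point set" and ord :: "monm \<Rightarrow> monm \<Rightarrow> bool"
  assumes mo: "monomial_order V ord"
begin

lemma ord_refl: "keys m \<subseteq> V \<Longrightarrow> ord m m"
  and ord_antisym: "keys m \<subseteq> V \<Longrightarrow> keys n \<subseteq> V \<Longrightarrow> ord m n \<Longrightarrow> ord n m \<Longrightarrow> m = n"
  and ord_trans: "keys m \<subseteq> V \<Longrightarrow> keys n \<subseteq> V \<Longrightarrow> keys l \<subseteq> V \<Longrightarrow> ord m n \<Longrightarrow> ord n l \<Longrightarrow> ord m l"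
  and ord_total: "keys m \<subseteq> V \<Longrightarrow> keys n \<subseteq> V \<Longrightarrow> ord m n \<or> ord n m"
  and ord_add_right: "keys m \<subseteq> V \<Longrightarrow> keys n \<subseteq> V \<Longrightarrow> keys l \<subseteq> V \<Longrightarrow> ord m n \<Longrightarrow> ord (m + l) (n + l)"
  using mo unfolding monomial_order_def by blast+

lemma ord_add_left:
  "keys m \<subseteq> V \<Longrightarrow> keys n \<subseteq> V \<Longrightarrow> keys l \<subseteq> V \<Longrightarrow> ord m n \<Longrightarrow> ord (l + m) (l + n)"
  by (metis ord_add_right add.commute)

lemma ord_add_mono:
  assumes V: "keys a \<subseteq> V" "keys b \<subseteq> V" "keys s \<subseteq> V" "keys t \<subseteq> V"
    and "ord a s" "ord b t"
  shows "ord (a + b) (s + t)"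
proof (rule ord_trans)
  show "ord (a + b) (s + b)" using ord_add_right[OF V(1,3,2) \<open>ord a s\<close>] .
  show "ord (s + b) (s + t)" using ord_add_left[OF V(2,4,3) \<open>ord b t\<close>] .
qed (simp_all add: V keys_add_subset)

lemma ord_add_cancel:
  assumes V: "keys a \<subseteq> V" "keys b \<subseteq> V" "keys s \<subseteq> V" "keys t \<subseteq> V"
    and "ord a s" "ord b t" and eq: "a + b = s + t"
  shows "a = s \<and> b = t"
proof -
  have "a + b = s + b"
  proof (rule ord_antisym)
    show "ord (a + b) (s + b)" using ord_add_right[OF V(1,3,2) \<open>ord a s\<close>] .
    show "ord (s + b) (a + b)" using ord_add_left[OF V(2,4,3) \<open>ord b t\<close>] eq by simp
  qed (simp_all add: V keys_add_subset)
  then show ?thesis using eq by simp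
qed

lemma ord_max_exists:
  assumes "finite A" "A \<noteq> {}" "\<forall>m\<in>A. keys m \<subseteq> V"
  shows "\<exists>m\<in>A. \<forall>m'\<in>A. ord m' m"
  using assms
proof (induction A rule: finite_ne_induct)
  case (singleton x)
  then show ?case using ord_refl by auto
next
  case (insert x F)
  then obtain m where m: "m \<in> F" "\<forall>m'\<in>F. ord m' m" by auto
  show ?case
  proof (cases "ord m x")
    case True
    then show ?thesis using m insert ord_trans[of _ m x] ord_refl[of x] by auto
  next
    case False
    then show ?thesis using ord_total[of m x] insert m by auto
  qed
qed

lemma init_eqI:
  assumes "in_ring V f" "m \<in> keys f" "\<forall>m'\<in>keys f. ord m' m"
  shows "init ord f = m"
  unfolding init_def
proof (rule the_equality)
  fix n assume "n \<in> keys f \<and> (\<forall>m'\<in>keys f. ord m' n)"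
  then show "n = m" using assms ord_antisym unfolding in_ring_def by blast
qed (use assms in blast)

lemma init_max:
  assumes f: "in_ring V f" and "f \<noteq> 0"
  shows init_in_keys: "init ord f \<in> keys f"
    and init_greatest: "\<forall>m\<in>keys f. ord m (init ord f)"
proof -
  have "finite (keys f)" "keys f \<noteq> {}" "\<forall>m\<in>keys f. keys m \<subseteq> V"
    using assms unfolding in_ring_def by auto
  then obtain m where "m \<in> keys f" "\<forall>m'\<in>keys f. ord m' m"
    using ord_max_exists by blast
  moreover from this have "init ord f = m" by (rule init_eqI[OF f])
  ultimately show "init ord f \<in> keys f" "\<forall>m\<in>keys f. ord m (init ord f)" by simp_all
qed

lemma init_mult:
  fixes q g :: "'k::idom mpoly"
  assumes q: "in_ring V q" and g: "in_ring V g" and qg: "q * g \<noteq> 0"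
  shows "init ord (q * g) = init ord q + init ord g"
proof -
  define s t where "s = init ord q" and "t = init ord g"
  have q0: "q \<noteq> 0" and g0: "g \<noteq> 0" using qg by auto
  have s: "s \<in> keys q" and t: "t \<in> keys g"
    using init_in_keys[OF q q0] init_in_keys[OF g g0] unfolding s_def t_def .
  have qV: "keys a \<subseteq> V" if "a \<in> keys q" for a using q that unfolding in_ring_def by blast
  have gV: "keys b \<subseteq> V" if "b \<in> keys g" for b using g that unfolding in_ring_def by blast
  have below: "ord a s" "ord b t" if "a \<in> keys q" "b \<in> keys g" for a b
    using init_greatest[OF q q0] init_greatest[OF g g0] that unfolding s_def t_def by auto
  have unique: "a = s" if "a \<in> keys q" "b \<in> keys g" "s + t = a + b" for a b
    using ord_add_cancel[OF qV[OF that(1)] gV[OF that(2)] qV[OF s] gV[OF t] below[OF that(1,2)]] that(3)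
    by simp
  have summand: "lookup q l * (\<Sum>r. lookup g r when s + t = l + r) =
    (lookup q s * lookup g t when l = s)" for l
  proof (cases "l = s")
    case True
    then show ?thesis by (simp add: Sum_any_when_equal')
  next
    case False
    have "(lookup g r when s + t = l + r) = 0" if "l \<in> keys q" for r
      using unique[of l r] that False by (cases "r \<in> keys g") (auto simp: in_keys_iff when_def)
    then show ?thesis using False by (cases "l \<in> keys q") (auto simp: in_keys_iff)
  qed
  have "lookup (q * g) (s + t) = lookup q s * lookup g t"
    by (simp add: lookup_mult summand Sum_any_when_equal)
  then have "s + t \<in> keys (q * g)" using s t by (simp add: in_keys_iff)
  moreover have "ord m (s + t)" if "m \<in> keys (q * g)" for m
  proof -
    obtain a b where "m = a + b" and ab: "a \<in> keys q" "b \<in> keys g"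
      using \<open>m \<in> keys (q * g)\<close> keys_mult by blast
    then show ?thesis
      using ord_add_mono[OF qV[OF ab(1)] gV[OF ab(2)] qV[OF s] gV[OF t] below[OF ab]] by simp
  qed
  ultimately show ?thesis using init_eqI[OF in_ring_mult[OF q g]] unfolding s_def t_def by blast
qed

lemma reduces_to_zero_init_dvd:
  fixes f :: "'k::field mpoly"
  assumes r: "reduces_to_zero V ord G f" and "f \<noteq> 0" "in_ring V f" "\<forall>g\<in>G. in_ring V g"
  shows "\<exists>g\<in>G. \<exists>u. init ord f = u + init ord g"
proof -
  obtain q Gs where Gs: "Gs \<subseteq> G" "finite Gs" "\<forall>g\<in>Gs. in_ring V (q g)"
      "f = (\<Sum>g\<in>Gs. q g * g)" "\<forall>g\<in>Gs. q g * g \<noteq> 0 \<longrightarrow> ord (init ord (q g * g)) (init ord f)"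
    using r unfolding reduces_to_zero_def by blast
  define m where "m = init ord f"
  have "m \<in> keys f" using init_in_keys[OF assms(3,2)] unfolding m_def .
  then have "(\<Sum>g\<in>Gs. lookup (q g * g) m) \<noteq> 0" using Gs(4) by (simp add: in_keys_iff lookup_sum)
  then obtain g where "g \<in> Gs" "lookup (q g * g) m \<noteq> 0" by (meson sum.neutral)
  then have g: "g \<in> Gs" "m \<in> keys (q g * g)" by (simp_all add: in_keys_iff)
  have q_g: "in_ring V (q g)" "in_ring V g" using Gs(1,3) assms(4) g(1) by auto
  have qg: "in_ring V (q g * g)" "q g * g \<noteq> 0" using in_ring_mult[OF q_g] g(2) by auto
  have "ord m (init ord (q g * g))" using init_greatest[OF qg] g(2) by blast
  moreover have "ord (init ord (q g * g)) m" using Gs(5) g qg(2) unfolding m_def by auto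
  moreover have "keys m \<subseteq> V" "keys (init ord (q g * g)) \<subseteq> V"
    using \<open>m \<in> keys f\<close> init_in_keys[OF qg] assms(3) qg(1) unfolding in_ring_def by auto
  ultimately have "m = init ord (q g * g)" using ord_antisym by blast
  also have "\<dots> = init ord (q g) + init ord g" using init_mult[OF q_g qg(2)] .
  finally have "init ord f = init ord (q g) + init ord g" unfolding m_def .
  then show ?thesis using g(1) Gs(1) by blast
qed

end

lemma inner_interval_mono:
  assumes "inner_interval P x y" "pt_le x x'" "pt_le y' y" "proper x' y'"
  shows "inner_interval P x' y'"
proof -
  have "interval x' y' \<subseteq> interval x y"
    using assms(2,3) unfolding interval_def pt_le_def by auto
  then show ?thesis using assms(1,4) unfolding inner_interval_def by blast
qed

lemma corners_in_vertices:
  assumes "inner_interval P x y"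
  shows "{x, y, (fst x, snd y), (fst y, snd x)} \<subseteq> vertices P"
proof -
  have lt: "fst x < fst y" "snd x < snd y" using assms unfolding inner_interval_def proper_def by auto
  have "v \<in> vertices P"
    if "fst c \<in> {fst x, fst y - 1}" "snd c \<in> {snd x, snd y - 1}" "v \<in> cell c" for c v
  proof -
    have "cell c \<subseteq> interval x y"
      using that lt unfolding cell_def interval_def pt_le_def by auto
    then show ?thesis using assms that(3) unfolding inner_interval_def vertices_def by blast
  qed
  from this[of x] this[of "(fst y - 1, snd y - 1)"] this[of "(fst x, snd y - 1)"] this[of "(fst y - 1, snd x)"]
  show ?thesis by (auto simp: cell_def interval_def pt_le_def)
qed

definition X :: "point \<Rightarrow> monm" where
  "X v = single v 1"

lemma lookup_X: "lookup (X v) w = (if w = v then 1 else 0)"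
  by (simp add: X_def lookup_single when_def)

lemma keys_X [simp]: "keys (X v) = {v}"
  by (simp add: X_def)

lemma keys_X_triple: "keys (X a + X b + X c) \<subseteq> {a, b, c}"
  using keys_add[of "X a + X b" "X c"] keys_add[of "X a" "X b"] by auto

lemma X_sum_dvd_triple:
  assumes "X e1 + X e2 + X e3 = u + (X s + X t)"
  shows "{s, t} \<subseteq> {e1, e2, e3}"
proof -
  have "lookup (X e1 + X e2 + X e3) s \<noteq> 0" "lookup (X e1 + X e2 + X e3) t \<noteq> 0"
    unfolding assms by (simp_all add: lookup_add lookup_X)
  then show ?thesis by (auto simp: lookup_add lookup_X split: if_splits)
qed

lemma X_triple_neq:
  assumes "e \<notin> {e1', e2', e3'}"
  shows "X e + X e2 + X e3 \<noteq> X e1' + X e2' + X e3'"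
proof
  assume "X e + X e2 + X e3 = X e1' + X e2' + X e3'"
  then have "lookup (X e + X e2 + X e3) e = lookup (X e1' + X e2' + X e3') e" by simp
  then show False using assms by (simp add: lookup_add lookup_X)
qed

lemma mon_gcd_disjoint:
  "{x, y} \<inter> {z, w} = {} \<Longrightarrow> mon_gcd (X x + X y) (X z + X w) = 0"
  by (rule poly_mapping_eqI) (auto simp: mon_gcd_def lookup_minus lookup_add lookup_X)

lemma minor_binomial:
  "minor x y = single (X x + X y) 1 - single (X (fst x, snd y) + X (fst y, snd x)) (1::'k::comm_ring_1)"
  by (simp add: minor_def Var_def mult_single X_def)

lemma single_neg_one: "single k (-1::'k::comm_ring_1) = - single k 1"
  by (rule poly_mapping_eqI) (simp add: lookup_single when_def)

lemma diagonal_ne_antidiagonal: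
  assumes "proper x y"
  shows "X x + X y \<noteq> X (fst x, snd y) + X (fst y, snd x)"
proof
  assume "X x + X y = X (fst x, snd y) + X (fst y, snd x)"
  then have "lookup (X x + X y) x = lookup (X (fst x, snd y) + X (fst y, snd x)) x" by simp
  then show False using assms by (auto simp: proper_def lookup_add lookup_X prod_eq_iff)
qed

lemma keys_minor:
  assumes "proper x y"
  shows "keys (minor x y :: 'k::comm_ring_1 mpoly) = {X x + X y, X (fst x, snd y) + X (fst y, snd x)}"
  using diagonal_ne_antidiagonal[OF assms]
  by (auto simp: minor_binomial in_keys_iff lookup_minus lookup_single when_def split: if_splits)

lemma lookup_minor:
  assumes "proper x y"
  shows lookup_minor_diagonal: "lookup (minor x y :: 'k::comm_ring_1 mpoly) (X x + X y) = 1"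
    and lookup_minor_antidiagonal:
      "lookup (minor x y :: 'k mpoly) (X (fst x, snd y) + X (fst y, snd x)) = -1"
  using diagonal_ne_antidiagonal[OF assms] by (auto simp: minor_binomial lookup_minus lookup_single)

lemma minor_in_ring:
  assumes "inner_interval P x y"
  shows "in_ring (vertices P) (minor x y :: 'k::comm_ring_1 mpoly)"
proof -
  have "proper x y" using assms unfolding inner_interval_def by auto
  then show ?thesis
    using corners_in_vertices[OF assms] keys_add[of "X _" "X _"]
    unfolding in_ring_def keys_minor[OF \<open>proper x y\<close>] by fastforce
qed

lemma init_minor:
  assumes "monomial_order (vertices P) ord" "inner_interval P x y"
  shows "init ord (minor x y :: 'k::comm_ring_1 mpoly) = X x + X y \<or>
    init ord (minor x y :: 'k mpoly) = X (fst x, snd y) + X (fst y, snd x)"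
proof -
  have "proper x y" using assms unfolding inner_interval_def by auto
  then have k: "keys (minor x y :: 'k mpoly) = {X x + X y, X (fst x, snd y) + X (fst y, snd x)}"
    by (rule keys_minor)
  then have "minor x y \<noteq> (0 :: 'k mpoly)" by auto
  with k show ?thesis using init_in_keys[OF assms(1) minor_in_ring[OF assms(2)]] by auto
qed

lemma spoly_shared_variable:
  fixes f g :: "'k::field mpoly"
  assumes f: "init ord f = X w + X u" and g: "init ord g = X w + X v" and "u \<noteq> v"
  shows "spoly ord f g =
    monom (X v) (inverse (lcoeff ord f)) * f - monom (X u) (inverse (lcoeff ord g)) * g"
proof -
  have lcm: "mon_lcm (X w + X u) (X w + X v) = X w + X u + X v"
    by (rule poly_mapping_eqI) (use assms in \<open>auto simp: mon_lcm_def lookup_minus lookup_add lookup_X\<close>)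
  have "X w + X u + X v - (X w + X u) = X v" "X w + X u + X v - (X w + X v) = X u"
    by (simp_all add: add.commute add.left_commute)
  then show ?thesis unfolding spoly_def Let_def f g lcm by simp
qed

lemma binomial_reduces_to_zero:
  assumes mo: "monomial_order (vertices P) ord"
    and r: "reduces_to_zero (vertices P) ord (inner_minors P) (single M1 1 - single M2 (1::'k::field))"
    and "M1 \<noteq> M2" "keys M1 \<subseteq> vertices P" "keys M2 \<subseteq> vertices P"
  shows "\<exists>x y u. inner_interval P x y \<and>
    (M1 = u + init ord (minor x y :: 'k mpoly) \<or> M2 = u + init ord (minor x y :: 'k mpoly))"
proof -
  let ?S = "single M1 1 - single M2 (1::'k)"
  have keys_S: "keys ?S = {M1, M2}"
    using \<open>M1 \<noteq> M2\<close> by (auto simp: in_keys_iff lookup_minus lookup_single when_def split: if_splits)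
  then have S: "?S \<noteq> 0" "in_ring (vertices P) ?S" using assms(4,5) unfolding in_ring_def by auto
  have "\<forall>g\<in>inner_minors P. in_ring (vertices P) (g :: 'k mpoly)"
    unfolding inner_minors_def using minor_in_ring by blast
  then obtain g :: "'k mpoly" and u where "g \<in> inner_minors P" "init ord ?S = u + init ord g"
    using reduces_to_zero_init_dvd[OF mo r S] by blast
  moreover obtain x y where "g = minor x y" "inner_interval P x y"
    using \<open>g \<in> inner_minors P\<close> unfolding inner_minors_def by blast
  moreover have "init ord ?S = M1 \<or> init ord ?S = M2" using init_in_keys[OF mo S(2,1)] keys_S by simp
  ultimately have "inner_interval P x y \<and>
    (M1 = u + init ord (minor x y :: 'k mpoly) \<or> M2 = u + init ord (minor x y :: 'k mpoly))"
    by auto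
  then show ?thesis by blast
qed

lemma triple_binomial_reduces_to_zero:
  fixes e1 e2 e3 e1' e2' e3' :: point
  assumes mo: "monomial_order (vertices P) ord"
    and r: "reduces_to_zero (vertices P) ord (inner_minors P)
      (single (X e1 + X e2 + X e3) 1 - single (X e1' + X e2' + X e3') (1::'k::field))"
    and ne: "X e1 + X e2 + X e3 \<noteq> X e1' + X e2' + X e3'"
    and V: "{e1, e2, e3, e1', e2', e3'} \<subseteq> vertices P"
  obtains x y E where "inner_interval P x y" "E = {e1, e2, e3} \<or> E = {e1', e2', e3'}"
    "init ord (minor x y :: 'k mpoly) = X x + X y \<and> {x, y} \<subseteq> E \<or>
     init ord (minor x y :: 'k mpoly) = X (fst x, snd y) + X (fst y, snd x) \<and>
     {(fst x, snd y), (fst y, snd x)} \<subseteq> E"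
proof -
  have "keys (X e1 + X e2 + X e3) \<subseteq> vertices P" "keys (X e1' + X e2' + X e3') \<subseteq> vertices P"
    using V keys_X_triple[of e1 e2 e3] keys_X_triple[of e1' e2' e3'] by blast+
  then obtain x y u where xy: "inner_interval P x y"
    and dvd: "X e1 + X e2 + X e3 = u + init ord (minor x y :: 'k mpoly) \<or>
      X e1' + X e2' + X e3' = u + init ord (minor x y :: 'k mpoly)"
    using binomial_reduces_to_zero[OF mo r ne] by blast
  have "init ord (minor x y :: 'k mpoly) = X x + X y \<and> {x, y} \<subseteq> {f1, f2, f3} \<or>
     init ord (minor x y :: 'k mpoly) = X (fst x, snd y) + X (fst y, snd x) \<and>
     {(fst x, snd y), (fst y, snd x)} \<subseteq> {f1, f2, f3}"
    if "X f1 + X f2 + X f3 = u + init ord (minor x y :: 'k mpoly)" for f1 f2 f3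
    using init_minor[OF mo xy, where 'k='k]
  proof (elim disjE)
    assume "init ord (minor x y :: 'k mpoly) = X x + X y"
    then show ?thesis using X_sum_dvd_triple[of f1 f2 f3 u x y] that by simp
  next
    assume "init ord (minor x y :: 'k mpoly) = X (fst x, snd y) + X (fst y, snd x)"
    then show ?thesis
      using X_sum_dvd_triple[of f1 f2 f3 u "(fst x, snd y)" "(fst y, snd x)"] that by simp
  qed
  note corners = this
  from dvd show thesis
  proof
    assume "X e1 + X e2 + X e3 = u + init ord (minor x y :: 'k mpoly)"
    from corners[OF this] show thesis by (intro that[OF xy, of "{e1, e2, e3}"]) simp_all
  next
    assume "X e1' + X e2' + X e3' = u + init ord (minor x y :: 'k mpoly)"
    from corners[OF this] show thesis by (intro that[OF xy, of "{e1', e2', e3'}"]) simp_all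
  qed
qed

(* Part (i) in coordinates: a = (a1,a2), b = (b1,b2), beta = (c1,c2); the two candidates for E
   are the supports of the terms x_a x_gamma x_delta and x_beta x_c x_d of the S-polynomial. *)
lemma diagonal_chain_triples:
  fixes a1 a2 b1 b2 c1 c2 :: int
  assumes lt: "a1 < b1" "b1 < c1" "a2 < b2" "b2 < c2"
    and nc: "\<not> inner_interval P (a1, b2) (b1, c2)" "\<not> inner_interval P (b1, a2) (c1, b2)"
    and xy: "inner_interval P x y"
    and E: "E = {(a1, a2), (b1, c2), (c1, b2)} \<or> E = {(c1, c2), (a1, b2), (b1, a2)}"
  shows "\<not> {x, y} \<subseteq> E"
    and "{(fst x, snd y), (fst y, snd x)} \<subseteq> E \<Longrightarrow>
      (x, y) = ((a1, a2), (b1, b2)) \<or> (x, y) = ((b1, b2), (c1, c2))"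
proof -
  obtain x1 x2 y1 y2 where xs: "x = (x1, x2)" "y = (y1, y2)" by fastforce
  have pr: "x1 < y1" "x2 < y2" using xy xs unfolding inner_interval_def proper_def by auto
  have "\<not> (pt_le x (a1, b2) \<and> pt_le (b1, c2) y)" "\<not> (pt_le x (b1, a2) \<and> pt_le (c1, b2) y)"
    using inner_interval_mono[OF xy] nc lt by (auto simp: proper_def)
  then show "\<not> {x, y} \<subseteq> E" using E pr lt xs by (auto simp: pt_le_def)
  show "(x, y) = ((a1, a2), (b1, b2)) \<or> (x, y) = ((b1, b2), (c1, c2))"
    if "{(fst x, snd y), (fst y, snd x)} \<subseteq> E" using that E pr lt xs by auto
qed

lemma spoly_diagonal_chain:
  fixes a1 a2 b1 b2 c1 c2 :: int
  assumes lt: "a1 < b1" "b1 < c1" "a2 < b2" "b2 < c2"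
    and f: "init ord (minor (a1, a2) (b1, b2) :: 'k::field mpoly) = X (a1, a2) + X (b1, b2)"
    and g: "init ord (minor (b1, b2) (c1, c2) :: 'k mpoly) = X (b1, b2) + X (c1, c2)"
  shows "spoly ord (minor (a1, a2) (b1, b2) :: 'k mpoly) (minor (b1, b2) (c1, c2)) =
    single (X (a1, a2) + X (b1, c2) + X (c1, b2)) 1 - single (X (c1, c2) + X (a1, b2) + X (b1, a2)) 1"
proof -
  have "lcoeff ord (minor (a1, a2) (b1, b2) :: 'k mpoly) = 1"
    "lcoeff ord (minor (b1, b2) (c1, c2) :: 'k mpoly) = 1"
    unfolding lcoeff_def f g using lt by (simp_all add: lookup_minor_diagonal proper_def)
  moreover have "init ord (minor (a1, a2) (b1, b2) :: 'k mpoly) = X (b1, b2) + X (a1, a2)"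
    using f by (simp add: add.commute)
  ultimately show ?thesis
    using spoly_shared_variable[OF _ g, of "minor (a1, a2) (b1, b2)" "(a1, a2)"] lt
    by (simp add: monom_def minor_binomial mult_single algebra_simps add_ac)
qed

lemma diagonal_chain_gcd:
  fixes a1 a2 b1 b2 c1 c2 :: int
  assumes mo: "monomial_order (vertices P) ord"
    and ab: "inner_interval P (a1, a2) (b1, b2)" and bc: "inner_interval P (b1, b2) (c1, c2)"
    and r: "reduces_to_zero (vertices P) ord (inner_minors P)
      (spoly ord (minor (a1, a2) (b1, b2) :: 'k::field mpoly) (minor (b1, b2) (c1, c2)))"
    and nc: "\<not> inner_interval P (a1, b2) (b1, c2)" "\<not> inner_interval P (b1, a2) (c1, b2)"
  shows "mon_gcd (init ord (minor (a1, a2) (b1, b2) :: 'k mpoly))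
    (init ord (minor (b1, b2) (c1, c2) :: 'k mpoly)) = 0"
proof (rule ccontr)
  assume gcd: "mon_gcd (init ord (minor (a1, a2) (b1, b2) :: 'k mpoly))
    (init ord (minor (b1, b2) (c1, c2) :: 'k mpoly)) \<noteq> 0"
  have lt: "a1 < b1" "b1 < c1" "a2 < b2" "b2 < c2"
    using ab bc unfolding inner_interval_def proper_def by auto
  have "mon_gcd (X (a1, b2) + X (b1, a2)) (X (b1, b2) + X (c1, c2)) = 0"
    "mon_gcd (X (a1, b2) + X (b1, a2)) (X (b1, c2) + X (c1, b2)) = 0"
    "mon_gcd (X (a1, a2) + X (b1, b2)) (X (b1, c2) + X (c1, b2)) = 0"
    using lt by (auto intro!: mon_gcd_disjoint)
  then have f: "init ord (minor (a1, a2) (b1, b2) :: 'k mpoly) = X (a1, a2) + X (b1, b2)"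
    and g: "init ord (minor (b1, b2) (c1, c2) :: 'k mpoly) = X (b1, b2) + X (c1, c2)"
    using init_minor[OF mo ab, where 'k='k] init_minor[OF mo bc, where 'k='k] gcd by auto
  have "X (a1, a2) + X (b1, c2) + X (c1, b2) \<noteq> X (c1, c2) + X (a1, b2) + X (b1, a2)"
    using lt by (intro X_triple_neq) auto
  moreover have "{(a1, a2), (b1, c2), (c1, b2), (c1, c2), (a1, b2), (b1, a2)} \<subseteq> vertices P"
    using corners_in_vertices[OF ab] corners_in_vertices[OF bc] by auto
  ultimately obtain x y E where xy: "inner_interval P x y"
    and E: "E = {(a1, a2), (b1, c2), (c1, b2)} \<or> E = {(c1, c2), (a1, b2), (b1, a2)}"
    and init_xy: "init ord (minor x y :: 'k mpoly) = X x + X y \<and> {x, y} \<subseteq> E \<or>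
      init ord (minor x y :: 'k mpoly) = X (fst x, snd y) + X (fst y, snd x) \<and>
      {(fst x, snd y), (fst y, snd x)} \<subseteq> E"
    using triple_binomial_reduces_to_zero[OF mo r[unfolded spoly_diagonal_chain[OF lt f g]]] by blast
  from init_xy show False
  proof (elim disjE conjE)
    assume "{x, y} \<subseteq> E"
    then show False using diagonal_chain_triples(1)[OF lt nc xy E] by blast
  next
    assume "init ord (minor x y :: 'k mpoly) = X (fst x, snd y) + X (fst y, snd x)"
      and "{(fst x, snd y), (fst y, snd x)} \<subseteq> E"
    moreover have "X (a1, a2) + X (b1, b2) \<noteq> X (a1, b2) + X (b1, a2)"
      "X (b1, b2) + X (c1, c2) \<noteq> X (b1, c2) + X (c1, b2)"
      using diagonal_ne_antidiagonal[of "(a1, a2)" "(b1, b2)"]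
        diagonal_ne_antidiagonal[of "(b1, b2)" "(c1, c2)"] lt by (simp_all add: proper_def)
    ultimately show False using diagonal_chain_triples(2)[OF lt nc xy E] f g by auto
  qed
qed

(* Part (ii) in coordinates: b = (b1,b2), [p,q] = [(b1,p2),(q1,b2)], [p',q'] = [(r1,b2),(b1,s2)],
   r = (r1,p2) and h = (q1,s2). *)
lemma antidiagonal_chain_triples:
  fixes r1 b1 q1 p2 b2 s2 :: int
  assumes lt: "r1 < b1" "b1 < q1" "p2 < b2" "b2 < s2"
    and nc: "\<not> inner_interval P (r1, p2) (b1, b2)" "\<not> inner_interval P (b1, b2) (q1, s2)"
    and xy: "inner_interval P x y"
    and E: "E = {(q1, p2), (r1, b2), (b1, s2)} \<or> E = {(r1, s2), (b1, p2), (q1, b2)}"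
  shows "\<not> {(fst x, snd y), (fst y, snd x)} \<subseteq> E"
    and "{x, y} \<subseteq> E \<Longrightarrow> (x, y) = ((b1, p2), (q1, b2)) \<or> (x, y) = ((r1, b2), (b1, s2))"
proof -
  obtain x1 x2 y1 y2 where xs: "x = (x1, x2)" "y = (y1, y2)" by fastforce
  have pr: "x1 < y1" "x2 < y2" using xy xs unfolding inner_interval_def proper_def by auto
  have "\<not> (pt_le x (r1, p2) \<and> pt_le (b1, b2) y)" "\<not> (pt_le x (b1, b2) \<and> pt_le (q1, s2) y)"
    using inner_interval_mono[OF xy] nc lt by (auto simp: proper_def)
  then show "\<not> {(fst x, snd y), (fst y, snd x)} \<subseteq> E" using E pr lt xs by (auto simp: pt_le_def)
  show "(x, y) = ((b1, p2), (q1, b2)) \<or> (x, y) = ((r1, b2), (b1, s2))"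
    if "{x, y} \<subseteq> E" using that E pr lt xs by auto
qed

lemma spoly_antidiagonal_chain:
  fixes r1 b1 q1 p2 b2 s2 :: int
  assumes lt: "r1 < b1" "b1 < q1" "p2 < b2" "b2 < s2"
    and f: "init ord (minor (b1, p2) (q1, b2) :: 'k::field mpoly) = X (b1, b2) + X (q1, p2)"
    and g: "init ord (minor (r1, b2) (b1, s2) :: 'k mpoly) = X (r1, s2) + X (b1, b2)"
  shows "spoly ord (minor (b1, p2) (q1, b2) :: 'k mpoly) (minor (r1, b2) (b1, s2)) =
    single (X (q1, p2) + X (r1, b2) + X (b1, s2)) 1 - single (X (r1, s2) + X (b1, p2) + X (q1, b2)) 1"
proof -
  have "lcoeff ord (minor (b1, p2) (q1, b2) :: 'k mpoly) = -1"
    "lcoeff ord (minor (r1, b2) (b1, s2) :: 'k mpoly) = -1"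
    using lookup_minor_antidiagonal[of "(b1, p2)" "(q1, b2)"] lookup_minor_antidiagonal[of "(r1, b2)" "(b1, s2)"]
    unfolding lcoeff_def f g using lt by (simp_all add: proper_def add.commute)
  moreover have "init ord (minor (r1, b2) (b1, s2) :: 'k mpoly) = X (b1, b2) + X (r1, s2)"
    using g by (simp add: add.commute)
  ultimately show ?thesis
    using spoly_shared_variable[OF f, of "minor (r1, b2) (b1, s2)" "(r1, s2)"] lt
    by (simp add: monom_def minor_binomial mult_single algebra_simps add_ac single_neg_one)
qed

lemma antidiagonal_chain_gcd:
  fixes r1 b1 q1 p2 b2 s2 :: int
  assumes mo: "monomial_order (vertices P) ord"
    and pq: "inner_interval P (b1, p2) (q1, b2)" and pq': "inner_interval P (r1, b2) (b1, s2)"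
    and r: "reduces_to_zero (vertices P) ord (inner_minors P)
      (spoly ord (minor (b1, p2) (q1, b2) :: 'k::field mpoly) (minor (r1, b2) (b1, s2)))"
    and nc: "\<not> inner_interval P (r1, p2) (b1, b2)" "\<not> inner_interval P (b1, b2) (q1, s2)"
  shows "mon_gcd (init ord (minor (b1, p2) (q1, b2) :: 'k mpoly))
    (init ord (minor (r1, b2) (b1, s2) :: 'k mpoly)) = 0"
proof (rule ccontr)
  assume gcd: "mon_gcd (init ord (minor (b1, p2) (q1, b2) :: 'k mpoly))
    (init ord (minor (r1, b2) (b1, s2) :: 'k mpoly)) \<noteq> 0"
  have lt: "r1 < b1" "b1 < q1" "p2 < b2" "b2 < s2"
    using pq pq' unfolding inner_interval_def proper_def by auto
  have "mon_gcd (X (b1, p2) + X (q1, b2)) (X (r1, b2) + X (b1, s2)) = 0"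
    "mon_gcd (X (b1, p2) + X (q1, b2)) (X (r1, s2) + X (b1, b2)) = 0"
    "mon_gcd (X (b1, b2) + X (q1, p2)) (X (r1, b2) + X (b1, s2)) = 0"
    using lt by (auto intro!: mon_gcd_disjoint)
  then have f: "init ord (minor (b1, p2) (q1, b2) :: 'k mpoly) = X (b1, b2) + X (q1, p2)"
    and g: "init ord (minor (r1, b2) (b1, s2) :: 'k mpoly) = X (r1, s2) + X (b1, b2)"
    using init_minor[OF mo pq, where 'k='k] init_minor[OF mo pq', where 'k='k] gcd by auto
  have "X (q1, p2) + X (r1, b2) + X (b1, s2) \<noteq> X (r1, s2) + X (b1, p2) + X (q1, b2)"
    using lt by (intro X_triple_neq) auto
  moreover have "{(q1, p2), (r1, b2), (b1, s2), (r1, s2), (b1, p2), (q1, b2)} \<subseteq> vertices P"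
    using corners_in_vertices[OF pq] corners_in_vertices[OF pq'] by auto
  ultimately obtain x y E where xy: "inner_interval P x y"
    and E: "E = {(q1, p2), (r1, b2), (b1, s2)} \<or> E = {(r1, s2), (b1, p2), (q1, b2)}"
    and init_xy: "init ord (minor x y :: 'k mpoly) = X x + X y \<and> {x, y} \<subseteq> E \<or>
      init ord (minor x y :: 'k mpoly) = X (fst x, snd y) + X (fst y, snd x) \<and>
      {(fst x, snd y), (fst y, snd x)} \<subseteq> E"
    using triple_binomial_reduces_to_zero[OF mo r[unfolded spoly_antidiagonal_chain[OF lt f g]]] by blast
  from init_xy show False
  proof (elim disjE conjE)
    assume "{(fst x, snd y), (fst y, snd x)} \<subseteq> E"
    then show False using antidiagonal_chain_triples(1)[OF lt nc xy E] by blast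
  next
    assume "init ord (minor x y :: 'k mpoly) = X x + X y" and "{x, y} \<subseteq> E"
    moreover have "X (b1, p2) + X (q1, b2) \<noteq> X (b1, b2) + X (q1, p2)"
      "X (r1, b2) + X (b1, s2) \<noteq> X (r1, s2) + X (b1, b2)"
      using diagonal_ne_antidiagonal[of "(b1, p2)" "(q1, b2)"]
        diagonal_ne_antidiagonal[of "(r1, b2)" "(b1, s2)"] lt by (simp_all add: proper_def)
    ultimately show False using antidiagonal_chain_triples(2)[OF lt nc xy E] f g by auto
  qed
qed

theorem lemma2p1:
  fixes P :: "point set" and ord :: "monm \<Rightarrow> monm \<Rightarrow> bool"
  assumes P: "collection_of_cells P"
    and ord: "monomial_order (vertices P) ord"
  shows
   "(\<forall>(a::point) (b::point) (\<beta>::point).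
      fst a < fst b \<and> fst b < fst \<beta> \<and> snd a < snd b \<and> snd b < snd \<beta> \<and>
      inner_interval P a b \<and> inner_interval P b \<beta> \<and>
      reduces_to_zero (vertices P) ord (inner_minors P)
        (spoly ord (minor a b :: 'k::field mpoly) (minor b \<beta>)) \<and>
      \<not> inner_interval P (fst a, snd b) (fst b, snd \<beta>) \<and>
      \<not> inner_interval P (fst b, snd a) (fst \<beta>, snd b)
      \<longrightarrow> mon_gcd (init ord (minor a b :: 'k mpoly)) (init ord (minor b \<beta> :: 'k mpoly)) = 0)
  \<and>
   (\<forall>(p::point) (q::point) (p'::point) (q'::point) (b::point).
      inner_interval P p q \<and> inner_interval P p' q' \<and>
      interval p q \<inter> interval p' q' = {b} \<and>
      b = (fst p, snd q) \<and> b = (fst q', snd p') \<and>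
      reduces_to_zero (vertices P) ord (inner_minors P)
        (spoly ord (minor p q :: 'k mpoly) (minor p' q')) \<and>
      \<not> inner_interval P (fst p', snd p) b \<and>
      \<not> inner_interval P b (fst q, snd q')
      \<longrightarrow> mon_gcd (init ord (minor p q :: 'k mpoly)) (init ord (minor p' q' :: 'k mpoly)) = 0)"
proof (intro conjI allI impI; elim conjE)
  fix a b \<beta> :: point
  assume "inner_interval P a b" "inner_interval P b \<beta>"
    "reduces_to_zero (vertices P) ord (inner_minors P) (spoly ord (minor a b :: 'k mpoly) (minor b \<beta>))"
    "\<not> inner_interval P (fst a, snd b) (fst b, snd \<beta>)" "\<not> inner_interval P (fst b, snd a) (fst \<beta>, snd b)"
  then show "mon_gcd (init ord (minor a b :: 'k mpoly)) (init ord (minor b \<beta> :: 'k mpoly)) = 0"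
    using diagonal_chain_gcd[OF ord, of "fst a" "snd a" "fst b" "snd b" "fst \<beta>" "snd \<beta>"] by simp
next
  fix p q p' q' b :: point
  assume "inner_interval P p q" "inner_interval P p' q'"
    "b = (fst p, snd q)" "b = (fst q', snd p')"
    "reduces_to_zero (vertices P) ord (inner_minors P) (spoly ord (minor p q :: 'k mpoly) (minor p' q'))"
    "\<not> inner_interval P (fst p', snd p) b" "\<not> inner_interval P b (fst q, snd q')"
  then show "mon_gcd (init ord (minor p q :: 'k mpoly)) (init ord (minor p' q' :: 'k mpoly)) = 0"
    using antidiagonal_chain_gcd[OF ord, of "fst b" "snd p" "fst q" "snd b" "fst p'" "snd q'"]
    by (cases p, cases q, cases p', cases q') auto
qed

end
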